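(* For every $n\ge1$, every extended irregular dominating set of the path $P_n$ has at least $\lceil (n+1)/2\rceil$ vertices; that is, $\gamma_e(P_n)\ge\lceil (n+1)/2\rceil$.
   Context: $P_n$ is the path on $n$ vertices $[x_1,\dots,x_n]$ with edges $\{x_i,x_{i+1}\}$. In a finite simple graph $\Gamma=(V,E)$ with distance $d$, a vertex $v$ carrying a non-negative integer label $\ell$ dominates (covers) exactly the vertices $u$ with $d(u,v)=\ell$; a vertex labeled $0$ dominates only itself. An extended irregular dominating set is a set $S\subseteq V$ with a labeling $\lambda:S\to\mathbb{Z}_{\ge0}$ with distinct labels on distinct vertices, such that every vertex of $V$ is dominated by some vertex of $S$; some vertex of $S$ has label $0$. $\gamma_e(\Gamma)$ denotes the minimum cardinality of an extended irregular dominating set of $\Gamma$. *)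

theory Defs
  imports Complex_Main
begin

text \<open>A finite simple graph is given by a vertex set V and a symmetric irreflexive
edge relation E.  A walk is a nonempty list of vertices of V in which consecutive
entries are adjacent; its length is the number of edges (length of list minus 1).\<close>

definition is_walk :: "'a set \<Rightarrow> ('a \<Rightarrow> 'a \<Rightarrow> bool) \<Rightarrow> 'a list \<Rightarrow> bool" where
  "is_walk V E xs \<longleftrightarrow> xs \<noteq> [] \<and> set xs \<subseteq> V \<and>
     (\<forall>i. Suc i < length xs \<longrightarrow> E (xs ! i) (xs ! Suc i))"

definition has_walk :: "'a set \<Rightarrow> ('a \<Rightarrow> 'a \<Rightarrow> bool) \<Rightarrow> 'a \<Rightarrow> 'a \<Rightarrow> nat \<Rightarrow> bool" where
  "has_walk V E u v k \<longleftrightarrow>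
     (\<exists>xs. is_walk V E xs \<and> hd xs = u \<and> last xs = v \<and> length xs = Suc k)"

definition at_dist :: "'a set \<Rightarrow> ('a \<Rightarrow> 'a \<Rightarrow> bool) \<Rightarrow> 'a \<Rightarrow> 'a \<Rightarrow> nat \<Rightarrow> bool" where
  "at_dist V E u v k \<longleftrightarrow> has_walk V E u v k \<and> (\<forall>j<k. \<not> has_walk V E u v j)"

definition ext_irr_dom :: "'a set \<Rightarrow> ('a \<Rightarrow> 'a \<Rightarrow> bool) \<Rightarrow> 'a set \<Rightarrow> ('a \<Rightarrow> nat) \<Rightarrow> bool" where
  "ext_irr_dom V E S lam \<longleftrightarrow> S \<subseteq> V \<and> inj_on lam S \<and>
     (\<forall>u\<in>V. \<exists>v\<in>S. at_dist V E v u (lam v)) \<and> (\<exists>v\<in>S. lam v = 0)"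

text \<open>The path P_n with vertices x_1,...,x_n (represented by 1..n) and edges {x_i,x_{i+1}}.\<close>

definition path_V :: "nat \<Rightarrow> nat set" where
  "path_V n = {1..n}"

definition path_E :: "nat \<Rightarrow> nat \<Rightarrow> bool" where
  "path_E i j \<longleftrightarrow> j = Suc i \<or> i = Suc j"

end

theory Submission
  imports Defs
begin

text \<open>In a path, the vertices at distance exactly \<open>k\<close> from \<open>v\<close> are among \<open>v - k\<close> and
  \<open>v + k\<close>. So every vertex of a dominating set covers at most two vertices, and the one
  labelled 0 covers only itself; hence \<open>n \<le> 2 |S| - 1\<close>.\<close>

lemma path_E_sym: "path_E x y \<longleftrightarrow> path_E y x"
  unfolding path_E_def by auto

lemma is_walk_rev_path_E:
  assumes "is_walk V path_E xs"
  shows "is_walk V path_E (rev xs)"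
  unfolding is_walk_def
proof (intro conjI allI impI)
  show "rev xs \<noteq> []" "set (rev xs) \<subseteq> V"
    using assms unfolding is_walk_def by auto
next
  fix i assume i: "Suc i < length (rev xs)"
  define j where "j = length xs - Suc (Suc i)"
  have "Suc j < length xs" "length xs - Suc i = Suc j" using i unfolding j_def by auto
  then have "path_E (xs ! j) (xs ! Suc j)"
    using assms unfolding is_walk_def by blast
  then show "path_E (rev xs ! i) (rev xs ! Suc i)"
    using i by (simp add: rev_nth j_def \<open>length xs - Suc i = Suc j\<close> path_E_sym)
qed

lemma is_walk_path_E_displacement:
  assumes "is_walk V path_E xs" "i < length xs"
  shows "\<bar>int (xs ! i) - int (xs ! 0)\<bar> \<le> int i"
  using assms(2)
proof (induction i)
  case 0
  then show ?case by simp
next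
  case (Suc i)
  then have "path_E (xs ! i) (xs ! Suc i)"
    using assms(1) unfolding is_walk_def by blast
  with Suc show ?case by (auto simp: path_E_def)
qed

lemma has_walk_path_E_length_ge:
  assumes "has_walk V path_E v u k"
  shows "\<bar>int u - int v\<bar> \<le> int k"
proof -
  obtain xs where xs: "is_walk V path_E xs" "hd xs = v" "last xs = u" "length xs = Suc k"
    using assms unfolding has_walk_def by blast
  then have "xs \<noteq> []" by auto
  then have "v = xs ! 0" "u = xs ! k"
    using xs by (simp_all add: hd_conv_nth last_conv_nth)
  then show ?thesis
    using is_walk_path_E_displacement[OF xs(1), of k] xs(4) by simp
qed

lemma has_walk_path_E_upwards:
  assumes "v \<le> u" "{v..u} \<subseteq> V"
  shows "has_walk V path_E v u (u - v)"
proof -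
  have "is_walk V path_E [v..<Suc u]"
    using assms unfolding is_walk_def path_E_def by (auto simp del: upt_Suc)
  moreover have "hd [v..<Suc u] = v" "last [v..<Suc u] = u" "length [v..<Suc u] = Suc (u - v)"
    using assms(1) by (simp_all del: upt_Suc)
  ultimately show ?thesis
    unfolding has_walk_def by blast
qed

lemma has_walk_path_E_downwards:
  assumes "v \<le> u" "{v..u} \<subseteq> V"
  shows "has_walk V path_E u v (u - v)"
proof -
  obtain xs where xs: "is_walk V path_E xs" "hd xs = v" "last xs = u" "length xs = Suc (u - v)"
    using has_walk_path_E_upwards[OF assms] unfolding has_walk_def by blast
  then have "is_walk V path_E (rev xs)" "hd (rev xs) = u" "last (rev xs) = v"
    using is_walk_rev_path_E by (auto simp: hd_rev last_rev)
  with xs(4) show ?thesis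
    unfolding has_walk_def by (metis length_rev)
qed

lemma at_dist_path_V_eq:
  assumes "u \<in> path_V n" "v \<in> path_V n" "at_dist (path_V n) path_E v u k"
  shows "u = v + k \<or> v = u + k"
proof -
  have "\<bar>int u - int v\<bar> \<le> int k"
    using assms(3) has_walk_path_E_length_ge unfolding at_dist_def by blast
  moreover have "has_walk (path_V n) path_E v u (nat \<bar>int u - int v\<bar>)"
  proof (cases "v \<le> u")
    case True
    with assms(1,2) have "{v..u} \<subseteq> path_V n" unfolding path_V_def by auto
    moreover have "nat \<bar>int u - int v\<bar> = u - v" using True by auto
    ultimately show ?thesis using has_walk_path_E_upwards[OF True] by metis
  next
    case False
    with assms(1,2) have "{u..v} \<subseteq> path_V n" unfolding path_V_def by auto
    moreover have "nat \<bar>int u - int v\<bar> = v - u" using False by auto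
    ultimately show ?thesis using has_walk_path_E_downwards[of u v] False by (metis nat_le_linear)
  qed
  then have "\<not> nat \<bar>int u - int v\<bar> < k"
    using assms(3) unfolding at_dist_def by blast
  ultimately show ?thesis by linarith
qed

lemma card_UN_le_two_mult_minus_one:
  assumes "finite I" "i0 \<in> I" "card (A i0) \<le> 1" "\<And>i. i \<in> I \<Longrightarrow> card (A i) \<le> 2"
  shows "card (\<Union>i\<in>I. A i) + 1 \<le> 2 * card I"
proof -
  have "card (\<Union>i\<in>I. A i) \<le> (\<Sum>i\<in>I. card (A i))"
    by (rule card_UN_le[OF assms(1)])
  also have "\<dots> = card (A i0) + (\<Sum>i\<in>I - {i0}. card (A i))"
    using assms(1,2) by (simp add: sum.remove)
  also have "\<dots> \<le> 1 + (\<Sum>i\<in>I - {i0}. 2)"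
    using assms(3,4) by (intro add_mono sum_mono) auto
  also have "\<dots> = 1 + 2 * (card I - 1)"
    using assms(1,2) by (simp add: card_Diff_singleton)
  finally show ?thesis
    using assms(1,2) card_gt_0_iff[of I] by fastforce
qed

theorem lemma5p6:
  fixes n :: nat and S :: "nat set" and lam :: "nat \<Rightarrow> nat"
  assumes "n \<ge> 1"
    and "ext_irr_dom (path_V n) path_E S lam"
  shows "of_int \<lceil>(real n + 1) / 2\<rceil> \<le> real (card S)"
proof -
  have S: "S \<subseteq> path_V n"
    and dominated: "\<forall>u\<in>path_V n. \<exists>v\<in>S. at_dist (path_V n) path_E v u (lam v)"
    and "\<exists>v\<in>S. lam v = 0"
    using assms(2) unfolding ext_irr_dom_def by auto
  then obtain v0 where v0: "v0 \<in> S" "lam v0 = 0" by blast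
  have "finite S"
    using S finite_subset unfolding path_V_def by blast
  have cover: "path_V n \<subseteq> (\<Union>v\<in>S. {v + lam v, v - lam v})"
  proof
    fix u assume u: "u \<in> path_V n"
    with dominated obtain v where v: "v \<in> S" "at_dist (path_V n) path_E v u (lam v)" by blast
    with u S have "u = v + lam v \<or> v = u + lam v" using at_dist_path_V_eq by blast
    then have "u \<in> {v + lam v, v - lam v}" by auto
    with v(1) show "u \<in> (\<Union>v\<in>S. {v + lam v, v - lam v})" by blast
  qed
  have "n \<le> card (\<Union>v\<in>S. {v + lam v, v - lam v})"
    using \<open>finite S\<close> card_mono[OF _ cover] unfolding path_V_def by auto
  also have "\<dots> + 1 \<le> 2 * card S"
    using \<open>finite S\<close> v0 by (intro card_UN_le_two_mult_minus_one) (auto simp: card_insert_le_m1)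
  finally have "n + 1 \<le> 2 * card S" by simp
  then have "(real n + 1) / 2 \<le> real (card S)"
    by (simp add: field_simps flip: of_nat_Suc of_nat_mult)
  then have "\<lceil>(real n + 1) / 2\<rceil> \<le> int (card S)"
    by (simp add: ceiling_le_iff)
  then show ?thesis by simp
qed

end
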